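(* Assume (F), fix $\alpha\in\,]0,1[$, and let $0\le u^-<u^+\le V$ with $\hat\rho_{u^+}\le\check\rho_{u^-}$. Then $$u^+-u^-\ \ge\ \frac{\beta}{2}\,\big(\hat\rho_{u^-}-\check\rho_{u^-}\big).$$
   Context: Hypothesis (F): $R>0$; $f\in C^2([0,R];[0,+\infty))$ with $f(\rho)=\rho v(\rho)$, $v\in C^2([0,R];[0,+\infty))$; $f(0)=f(R)=0$; there are $B\ge\beta>0$ with $-B\le f''\le-\beta$ on $[0,R]$; $v'(\rho)<0$ for $\rho\in\,]0,R[$. Let $V:=\max_{[0,R]}v=v(0)$. Define $f_\alpha(\rho):=\alpha f(\rho/\alpha)$ for $\rho\in[0,\alpha R]$. For $u\in[0,V]$: $\tilde\rho_u$ is the unique solution of $f_\alpha'(\rho)=u$; $\varphi_u(\rho):=f_\alpha(\tilde\rho_u)+u(\rho-\tilde\rho_u)$ for $\rho\in[0,R]$; $\mathcal I_u:=\{\rho\in[0,R]: f(\rho)=\varphi_u(\rho)\}$, $\check\rho_u:=\min\mathcal I_u$, $\hat\rho_u:=\max\mathcal I_u$. *)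

theory Defs
  imports "HOL-Analysis.Analysis"
begin

definition f_alpha :: "(real \<Rightarrow> real) \<Rightarrow> real \<Rightarrow> real \<Rightarrow> real" where
  "f_alpha f \<alpha> \<rho> = \<alpha> * f (\<rho> / \<alpha>)"

definition rho_tilde :: "(real \<Rightarrow> real) \<Rightarrow> real \<Rightarrow> real \<Rightarrow> real \<Rightarrow> real" where
  "rho_tilde f R \<alpha> u = (THE \<rho>. \<rho> \<in> {0..\<alpha>*R} \<and>
      (f_alpha f \<alpha> has_real_derivative u) (at \<rho> within {0..\<alpha>*R}))"

definition phi_u :: "(real \<Rightarrow> real) \<Rightarrow> real \<Rightarrow> real \<Rightarrow> real \<Rightarrow> real \<Rightarrow> real" where
  "phi_u f R \<alpha> u \<rho> = f_alpha f \<alpha> (rho_tilde f R \<alpha> u) + u * (\<rho> - rho_tilde f R \<alpha> u)"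

definition I_u :: "(real \<Rightarrow> real) \<Rightarrow> real \<Rightarrow> real \<Rightarrow> real \<Rightarrow> real set" where
  "I_u f R \<alpha> u = {\<rho> \<in> {0..R}. f \<rho> = phi_u f R \<alpha> u \<rho>}"

text \<open>min and max of the (compact, nonempty) set I_u\<close>
definition rho_check :: "(real \<Rightarrow> real) \<Rightarrow> real \<Rightarrow> real \<Rightarrow> real \<Rightarrow> real" where
  "rho_check f R \<alpha> u = Inf (I_u f R \<alpha> u)"

definition rho_hat :: "(real \<Rightarrow> real) \<Rightarrow> real \<Rightarrow> real \<Rightarrow> real \<Rightarrow> real" where
  "rho_hat f R \<alpha> u = Sup (I_u f R \<alpha> u)"

end

theory Submission
  imports Defs
begin

text \<open>
  Since \<open>f'' \<le> -\<beta>\<close>, \<open>f\<close> is \<open>\<beta>\<close>-strongly concave, and \<open>\<tilde>\<rho>\<^sub>u = \<alpha> s\<close> where \<open>f' s = u\<close>.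
  Let \<open>a \<le> b\<close> be the extreme contact points of \<open>f\<close> with the line \<open>\<phi>\<^sub>u\<^sub>-\<close> and \<open>c \<le> a\<close> the last
  contact point with \<open>\<phi>\<^sub>u\<^sub>+\<close>. At \<open>b\<close>, \<open>f\<close> lies at least \<open>\<beta>/2 (b - a)\<^sup>2\<close> below its tangent at
  \<open>a\<close>; as the chord from \<open>a\<close> to \<open>b\<close> has slope \<open>u\<^sup>-\<close>, this gives
  \<open>\<beta>/2 (b - a)\<^sup>2 \<le> (f' a - u\<^sup>-) (b - a)\<close>. It remains to see \<open>f' a \<le> f' c \<le> u\<^sup>+\<close>. The first
  inequality holds as \<open>f'\<close> decreases. For the second, \<open>f\<close> touches \<open>\<phi>\<^sub>u\<^sub>+\<close>, of slope \<open>u\<^sup>+\<close>,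
  at \<open>c\<close> but lies strictly above it at \<open>\<alpha> s \<le> c\<close>, because strong concavity and \<open>f 0 = 0\<close>
  give \<open>f (\<alpha> s) > \<alpha> f s\<close>; so the tangent at \<open>c\<close> cannot be steeper than \<open>u\<^sup>+\<close>.
\<close>

lemma at_within_Icc_nontrivial:
  fixes a b x :: real
  assumes "a < b" "x \<in> {a..b}"
  shows "at x within {a..b} \<noteq> bot"
  using assms by (simp add: trivial_limit_within)

lemma deriv_nonpos_imp_antitone_Icc:
  fixes g g' :: "real \<Rightarrow> real"
  assumes deriv: "\<And>x. x \<in> {l..r} \<Longrightarrow> (g has_real_derivative g' x) (at x within {l..r})"
    and nonpos: "\<And>x. l < x \<Longrightarrow> x < r \<Longrightarrow> g' x \<le> 0"
    and "l \<le> a" "a \<le> b" "b \<le> r"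
  shows "g b \<le> g a"
proof (rule DERIV_nonpos_imp_decreasing_open[OF \<open>a \<le> b\<close>])
  fix x assume x: "a < x" "x < b"
  with assms have "DERIV g x :> g' x"
    using deriv[of x] by (simp add: at_within_Icc_at)
  with x assms show "\<exists>y. DERIV g x :> y \<and> y \<le> 0"
    using nonpos[of x] by force
next
  show "continuous_on {a..b} g"
    using DERIV_continuous_on[OF deriv] by (rule continuous_on_subset) (use assms in auto)
qed

lemma deriv_plus_linear_antitone:
  fixes f' f'' :: "real \<Rightarrow> real"
  assumes "\<And>x. x \<in> {l..r} \<Longrightarrow> (f' has_real_derivative f'' x) (at x within {l..r})"
    and "\<And>x. x \<in> {l..r} \<Longrightarrow> f'' x \<le> - \<beta>"
    and "l \<le> x" "x \<le> y" "y \<le> r"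
  shows "f' y + \<beta> * y \<le> f' x + \<beta> * x"
proof (rule deriv_nonpos_imp_antitone_Icc[of l r "\<lambda>t. f' t + \<beta> * t" "\<lambda>t. f'' t + \<beta>"])
  fix t assume "t \<in> {l..r}"
  then show "((\<lambda>t. f' t + \<beta> * t) has_real_derivative f'' t + \<beta>) (at t within {l..r})"
    using DERIV_add[OF assms(1) DERIV_cmult[OF DERIV_ident, of \<beta>]] by simp
next
  fix t assume "l < t" "t < r"
  then show "f'' t + \<beta> \<le> 0"
    using assms(2)[of t] by simp
qed (use assms in auto)

text \<open>
  \<open>\<beta>\<close>-strong concavity of \<open>f\<close> on \<open>[l, r]\<close> is expressed below as antitonicity of \<open>f' t + \<beta> t\<close>.
\<close>

lemma strongly_concave_tangent_bound:
  fixes f f' :: "real \<Rightarrow> real"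
  assumes deriv: "\<And>x. x \<in> {l..r} \<Longrightarrow> (f has_real_derivative f' x) (at x within {l..r})"
    and antitone: "\<And>x y. l \<le> x \<Longrightarrow> x \<le> y \<Longrightarrow> y \<le> r \<Longrightarrow> f' y + \<beta> * y \<le> f' x + \<beta> * x"
    and x: "x \<in> {l..r}" and y: "y \<in> {l..r}"
  shows "f y \<le> f x + f' x * (y - x) - \<beta> / 2 * (y - x)\<^sup>2"
proof -
  define g where "g t = f t - f' x * t + \<beta> / 2 * (t - x)\<^sup>2" for t
  define g' where "g' t = f' t - f' x + \<beta> * (t - x)" for t
  have "(g has_real_derivative g' t) (at t within {l..r})" if "t \<in> {l..r}" for t
    unfolding g_def[abs_def] g'_def
    by (rule derivative_eq_intros deriv[OF that] refl | simp)+
  then have g_deriv: "(g has_real_derivative g' t) (at t within S)"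
    if "t \<in> S" "S \<subseteq> {l..r}" for t S
    using that DERIV_subset by blast
  have "g y \<le> g x"
  proof (cases "x \<le> y")
    case True
    show ?thesis
    proof (rule deriv_nonpos_imp_antitone_Icc[of x r g g'])
      fix t assume "t \<in> {x..r}"
      then show "(g has_real_derivative g' t) (at t within {x..r})"
        using x by (intro g_deriv) auto
    next
      fix t assume "x < t" "t < r"
      then show "g' t \<le> 0"
        using antitone[of x t] x by (simp add: g'_def algebra_simps)
    qed (use x y True in auto)
  next
    case False
    have "- g x \<le> - g y"
    proof (rule deriv_nonpos_imp_antitone_Icc[of l x "\<lambda>t. - g t" "\<lambda>t. - g' t"])
      fix t assume "t \<in> {l..x}"
      then show "((\<lambda>t. - g t) has_real_derivative - g' t) (at t within {l..x})"
        using x by (intro DERIV_minus g_deriv) auto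
    next
      fix t assume "l < t" "t < x"
      then show "- g' t \<le> 0"
        using antitone[of t x] x by (simp add: g'_def algebra_simps)
    qed (use x y False in auto)
    then show ?thesis by simp
  qed
  then show ?thesis
    by (simp add: g_def algebra_simps)
qed

lemma strongly_concave_chord_bound:
  fixes f f' :: "real \<Rightarrow> real"
  assumes deriv: "\<And>x. x \<in> {l..r} \<Longrightarrow> (f has_real_derivative f' x) (at x within {l..r})"
    and antitone: "\<And>x y. l \<le> x \<Longrightarrow> x \<le> y \<Longrightarrow> y \<le> r \<Longrightarrow> f' y + \<beta> * y \<le> f' x + \<beta> * x"
    and x: "x \<in> {l..r}" and y: "y \<in> {l..r}" and t: "0 \<le> t" "t \<le> 1"
  shows "(1 - t) * f x + t * f y + \<beta> / 2 * t * (1 - t) * (y - x)\<^sup>2 \<le> f ((1 - t) * x + t * y)"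
proof -
  define z where "z = (1 - t) * x + t * y"
  have "z \<in> {l..r}"
    using convexD_alt[OF convex_real_interval(5) x y t] by (simp add: z_def algebra_simps)
  then have "f x \<le> f z + f' z * (x - z) - \<beta> / 2 * (x - z)\<^sup>2"
    and "f y \<le> f z + f' z * (y - z) - \<beta> / 2 * (y - z)\<^sup>2"
    using strongly_concave_tangent_bound[OF deriv antitone] x y by blast+
  with t have "(1 - t) * f x + t * f y
      \<le> (1 - t) * (f z + f' z * (x - z) - \<beta> / 2 * (x - z)\<^sup>2)
         + t * (f z + f' z * (y - z) - \<beta> / 2 * (y - z)\<^sup>2)"
    by (intro add_mono mult_left_mono) auto
  also have "\<dots> = f z + f' z * ((1 - t) * (x - z) + t * (y - z))
      - \<beta> / 2 * ((1 - t) * (x - z)\<^sup>2 + t * (y - z)\<^sup>2)"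
    by (simp add: field_simps)
  also have "\<dots> = f z - \<beta> / 2 * t * (1 - t) * (y - x)\<^sup>2"
  proof -
    have "(1 - t) * (x - z) + t * (y - z) = 0"
      by (simp add: z_def algebra_simps)
    moreover have "(1 - t) * (x - z)\<^sup>2 + t * (y - z)\<^sup>2 = t * (1 - t) * (y - x)\<^sup>2"
      unfolding z_def power2_eq_square by algebra
    ultimately show ?thesis
      by simp
  qed
  finally show ?thesis
    by (simp add: z_def)
qed

lemma deriv_0_of_times:
  fixes f v v' :: "real \<Rightarrow> real"
  assumes R: "0 < R"
    and f_deriv: "(f has_real_derivative f'0) (at 0 within {0..R})"
    and v_deriv: "(v has_real_derivative v'0) (at 0 within {0..R})"
    and fv: "\<And>\<rho>. \<rho> \<in> {0..R} \<Longrightarrow> f \<rho> = \<rho> * v \<rho>"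
  shows "f'0 = v 0"
proof -
  have "((\<lambda>x. x * v x) has_real_derivative 1 * v 0 + v'0 * 0) (at 0 within {0..R})"
    by (intro DERIV_mult DERIV_ident v_deriv)
  then have "((\<lambda>x. x * v x) has_real_derivative v 0) (at 0 within {0..R})"
    by simp
  then have "(f has_real_derivative v 0) (at 0 within {0..R})"
  proof (rule has_field_derivative_transform_within[where d=1])
    show "x * v x = f x" if "x \<in> {0..R}" for x
      using fv[OF that] by simp
  qed (use R in auto)
  moreover have "at 0 within {0..R} \<noteq> bot"
    using R by (intro at_within_Icc_nontrivial) auto
  ultimately show ?thesis
    using has_field_derivative_unique[OF f_deriv] by blast
qed

locale strongly_concave_flux =
  fixes f f' :: "real \<Rightarrow> real" and R \<beta> :: real
  assumes R_pos: "0 < R" and \<beta>_pos: "0 < \<beta>"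
    and f_deriv: "\<And>x. x \<in> {0..R} \<Longrightarrow> (f has_real_derivative f' x) (at x within {0..R})"
    and deriv_continuous: "continuous_on {0..R} f'"
    and strongly_antitone: "\<And>x y. 0 \<le> x \<Longrightarrow> x \<le> y \<Longrightarrow> y \<le> R \<Longrightarrow> f' y + \<beta> * y \<le> f' x + \<beta> * x"
    and f_nonneg: "\<And>x. x \<in> {0..R} \<Longrightarrow> 0 \<le> f x"
    and f_0: "f 0 = 0" and f_R: "f R = 0"
begin

lemma tangent_bound:
  assumes "x \<in> {0..R}" "y \<in> {0..R}"
  shows "f y \<le> f x + f' x * (y - x) - \<beta> / 2 * (y - x)\<^sup>2"
  using f_deriv strongly_antitone assms by (rule strongly_concave_tangent_bound)

lemma deriv_strict_antitone:
  assumes "0 \<le> x" "x < y" "y \<le> R"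
  shows "f' y < f' x"
  using strongly_antitone[of x y] assms mult_strict_left_mono[OF \<open>x < y\<close> \<beta>_pos] by linarith

lemma deriv_R_neg: "f' R < 0"
proof -
  have "f 0 \<le> f R + f' R * (0 - R) - \<beta> / 2 * (0 - R)\<^sup>2"
    using tangent_bound[of R 0] R_pos by auto
  then have "f' R * R \<le> - (\<beta> / 2 * R\<^sup>2)"
    using f_0 f_R by (simp add: algebra_simps)
  also have "\<dots> < 0"
    using \<beta>_pos R_pos by simp
  finally show ?thesis
    using R_pos by (simp add: mult_less_0_iff)
qed

lemma deriv_attains:
  assumes "0 \<le> u" "u \<le> f' 0"
  obtains s where "s \<in> {0..R}" "f' s = u"
  using IVT2'[of f' R u 0] deriv_R_neg deriv_continuous R_pos assms by auto

lemma scaling_lower_bound: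
  assumes "s \<in> {0..R}" "0 \<le> \<alpha>" "\<alpha> \<le> 1"
  shows "\<alpha> * f s + \<beta> / 2 * \<alpha> * (1 - \<alpha>) * s\<^sup>2 \<le> f (\<alpha> * s)"
  using strongly_concave_chord_bound[OF f_deriv strongly_antitone, of 0 s \<alpha>] assms R_pos f_0
  by simp

lemma Sup_velocity_le_deriv_0:
  fixes v :: "real \<Rightarrow> real"
  assumes fv: "\<And>\<rho>. \<rho> \<in> {0..R} \<Longrightarrow> f \<rho> = \<rho> * v \<rho>"
    and v_deriv: "(v has_real_derivative v'0) (at 0 within {0..R})"
  shows "Sup (v ` {0..R}) \<le> f' 0"
proof (rule cSup_least)
  show "v ` {0..R} \<noteq> {}"
    using R_pos by auto
next
  fix w assume "w \<in> v ` {0..R}"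
  then obtain r where r: "r \<in> {0..R}" "w = v r" by auto
  show "w \<le> f' 0"
  proof (cases "r = 0")
    case True
    then show ?thesis
      using r deriv_0_of_times[OF R_pos f_deriv v_deriv fv] R_pos by simp
  next
    case False
    have "f r \<le> f 0 + f' 0 * (r - 0) - \<beta> / 2 * (r - 0)\<^sup>2"
      using tangent_bound[of 0 r] r R_pos by auto
    moreover have "0 \<le> \<beta> / 2 * (r - 0)\<^sup>2"
      using \<beta>_pos by simp
    ultimately have "r * v r \<le> r * f' 0"
      using fv[OF r(1)] f_0 by (simp add: algebra_simps)
    with r False show ?thesis
      by (simp add: mult_le_cancel_left_pos)
  qed
qed

lemma f_alpha_deriv:
  assumes \<alpha>: "0 < \<alpha>" and \<rho>: "\<rho> \<in> {0..\<alpha> * R}"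
  shows "(f_alpha f \<alpha> has_real_derivative f' (\<rho> / \<alpha>)) (at \<rho> within {0..\<alpha> * R})"
proof -
  have img: "(\<lambda>\<rho>. \<rho> / \<alpha>) ` {0..\<alpha> * R} = {0..R}"
  proof
    show "(\<lambda>\<rho>. \<rho> / \<alpha>) ` {0..\<alpha> * R} \<subseteq> {0..R}"
      using \<alpha> by (auto simp: field_simps)
    show "{0..R} \<subseteq> (\<lambda>\<rho>. \<rho> / \<alpha>) ` {0..\<alpha> * R}"
    proof
      fix x assume "x \<in> {0..R}"
      with \<alpha> show "x \<in> (\<lambda>\<rho>. \<rho> / \<alpha>) ` {0..\<alpha> * R}"
        by (intro image_eqI[of _ _ "\<alpha> * x"]) (auto intro: mult_left_mono)
    qed
  qed
  have "\<rho> / \<alpha> \<in> {0..R}"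
    using \<rho> \<alpha> by (auto simp: field_simps)
  then have "(f has_real_derivative f' (\<rho> / \<alpha>)) (at (\<rho> / \<alpha>) within (\<lambda>\<rho>. \<rho> / \<alpha>) ` {0..\<alpha> * R})"
    unfolding img by (rule f_deriv)
  moreover have "((\<lambda>\<rho>. \<rho> / \<alpha>) has_real_derivative 1 / \<alpha>) (at \<rho> within {0..\<alpha> * R})"
    using DERIV_cdivide[OF DERIV_ident, of \<alpha>] by simp
  ultimately have "(f \<circ> (\<lambda>\<rho>. \<rho> / \<alpha>) has_real_derivative f' (\<rho> / \<alpha>) * (1 / \<alpha>)) (at \<rho> within {0..\<alpha> * R})"
    by (rule DERIV_image_chain)
  then have "((\<lambda>x. \<alpha> * (f \<circ> (\<lambda>\<rho>. \<rho> / \<alpha>)) x) has_real_derivative \<alpha> * (f' (\<rho> / \<alpha>) * (1 / \<alpha>)))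
      (at \<rho> within {0..\<alpha> * R})"
    by (rule DERIV_cmult)
  then show ?thesis
    using \<alpha> by (simp add: f_alpha_def[abs_def] o_def)
qed

lemma rho_tilde_eq:
  assumes \<alpha>: "0 < \<alpha>" and s: "s \<in> {0..R}"
  shows "rho_tilde f R \<alpha> (f' s) = \<alpha> * s"
  unfolding rho_tilde_def
proof (rule the_equality)
  have "\<alpha> * s \<in> {0..\<alpha> * R}"
    using s \<alpha> by (auto intro: mult_left_mono)
  with f_alpha_deriv[OF \<alpha>] \<alpha> show
    "\<alpha> * s \<in> {0..\<alpha> * R} \<and> (f_alpha f \<alpha> has_real_derivative f' s) (at (\<alpha> * s) within {0..\<alpha> * R})"
    by fastforce
next
  fix \<rho> assume \<rho>: "\<rho> \<in> {0..\<alpha> * R} \<and> (f_alpha f \<alpha> has_real_derivative f' s) (at \<rho> within {0..\<alpha> * R})"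
  have "at \<rho> within {0..\<alpha> * R} \<noteq> bot"
    using \<rho> \<alpha> R_pos by (intro at_within_Icc_nontrivial) auto
  then have eq: "f' (\<rho> / \<alpha>) = f' s"
    using has_field_derivative_unique[OF f_alpha_deriv[OF \<alpha>] conjunct2[OF \<rho>]] \<rho> by blast
  have "\<rho> / \<alpha> \<in> {0..R}"
    using \<rho> \<alpha> by (auto simp: field_simps)
  then have "\<rho> / \<alpha> = s"
    using deriv_strict_antitone[of "\<rho> / \<alpha>" s] deriv_strict_antitone[of s "\<rho> / \<alpha>"] eq s
    by (cases "\<rho> / \<alpha>" s rule: linorder_cases) auto
  with \<alpha> show "\<rho> = \<alpha> * s"
    by (auto simp: field_simps)
qed

lemma I_u_eq:
  assumes "0 < \<alpha>" "s \<in> {0..R}"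
  shows "I_u f R \<alpha> (f' s) = {\<rho> \<in> {0..R}. f \<rho> = \<alpha> * f s + f' s * (\<rho> - \<alpha> * s)}"
  using assms by (simp add: I_u_def phi_u_def rho_tilde_eq f_alpha_def)

lemma contact_points:
  assumes \<alpha>: "0 < \<alpha>" "\<alpha> < 1" and s: "s \<in> {0..R}" and u: "0 \<le> f' s"
  shows "rho_check f R \<alpha> (f' s) \<in> I_u f R \<alpha> (f' s)"
    and "rho_hat f R \<alpha> (f' s) \<in> I_u f R \<alpha> (f' s)"
    and "\<alpha> * s \<le> rho_hat f R \<alpha> (f' s)"
proof -
  define h where "h \<rho> = f \<rho> - (\<alpha> * f s + f' s * (\<rho> - \<alpha> * s))" for \<rho>
  have I: "I_u f R \<alpha> (f' s) = {\<rho> \<in> {0..R}. h \<rho> = 0}"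
    using I_u_eq[OF \<alpha>(1) s] by (auto simp: h_def)
  have h_cont: "continuous_on {0..R} h"
    unfolding h_def[abs_def] by (intro continuous_intros DERIV_continuous_on[OF f_deriv])
  have closed: "closed (I_u f R \<alpha> (f' s))"
    unfolding I by (rule continuous_closed_preimage_constant[OF h_cont]) simp
  have bdd: "bdd_above (I_u f R \<alpha> (f' s))" "bdd_below (I_u f R \<alpha> (f' s))"
    unfolding I by (auto intro!: bdd_aboveI[of _ R] bdd_belowI[of _ 0])
  have \<alpha>s: "0 \<le> \<alpha> * s" "\<alpha> * s \<le> R"
    using s \<alpha> mult_left_le_one_le[of s \<alpha>] by auto
  have "0 \<le> \<beta> / 2 * \<alpha> * (1 - \<alpha>) * s\<^sup>2"
    using \<beta>_pos \<alpha> by simp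
  moreover have "\<alpha> * f s + \<beta> / 2 * \<alpha> * (1 - \<alpha>) * s\<^sup>2 \<le> f (\<alpha> * s)"
    using scaling_lower_bound[OF s] \<alpha> by simp
  ultimately have "0 \<le> h (\<alpha> * s)"
    by (simp add: h_def)
  moreover have "h R \<le> 0"
  proof -
    have "0 \<le> \<alpha> * f s" "0 \<le> f' s * (R - \<alpha> * s)"
      using f_nonneg[OF s] u \<alpha> \<alpha>s(2) by simp_all
    then show ?thesis
      using f_R by (simp add: h_def)
  qed
  ultimately obtain d where d: "\<alpha> * s \<le> d" "d \<le> R" "h d = 0"
    using IVT2'[of h R 0 "\<alpha> * s"] \<alpha>s continuous_on_subset[OF h_cont, of "{\<alpha> * s..R}"] by auto
  with \<alpha>s have d_mem: "d \<in> I_u f R \<alpha> (f' s)"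
    unfolding I by auto
  then have ne: "I_u f R \<alpha> (f' s) \<noteq> {}"
    by auto
  show "rho_check f R \<alpha> (f' s) \<in> I_u f R \<alpha> (f' s)"
    unfolding rho_check_def by (rule closed_contains_Inf[OF ne bdd(2) closed])
  show "rho_hat f R \<alpha> (f' s) \<in> I_u f R \<alpha> (f' s)"
    unfolding rho_hat_def by (rule closed_contains_Sup[OF ne bdd(1) closed])
  have "d \<le> rho_hat f R \<alpha> (f' s)"
    unfolding rho_hat_def by (rule cSup_upper[OF d_mem bdd(1)])
  with d show "\<alpha> * s \<le> rho_hat f R \<alpha> (f' s)"
    by linarith
qed

lemma deriv_at_contact_le:
  assumes \<alpha>: "0 < \<alpha>" "\<alpha> < 1" and s: "s \<in> {0..R}"
    and c: "c \<in> I_u f R \<alpha> (f' s)" and right: "\<alpha> * s \<le> c"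
  shows "f' c \<le> f' s"
proof -
  have c_mem: "c \<in> {0..R}" and contact: "f c = \<alpha> * f s + f' s * (c - \<alpha> * s)"
    using c I_u_eq[OF \<alpha>(1) s] by auto
  have "\<alpha> * s \<in> {0..R}"
    using s \<alpha> mult_left_le_one_le[of s \<alpha>] by auto
  then have "f (\<alpha> * s) \<le> f c + f' c * (\<alpha> * s - c) - \<beta> / 2 * (\<alpha> * s - c)\<^sup>2"
    using tangent_bound c_mem by blast
  moreover have "\<alpha> * f s + \<beta> / 2 * \<alpha> * (1 - \<alpha>) * s\<^sup>2 \<le> f (\<alpha> * s)"
    using scaling_lower_bound[OF s] \<alpha> by simp
  moreover have "(f' s - f' c) * (c - \<alpha> * s) = f' s * (c - \<alpha> * s) + f' c * (\<alpha> * s - c)"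
    and "\<beta> / 2 * (\<alpha> * (1 - \<alpha>) * s\<^sup>2 + (c - \<alpha> * s)\<^sup>2)
      = \<beta> / 2 * \<alpha> * (1 - \<alpha>) * s\<^sup>2 + \<beta> / 2 * (\<alpha> * s - c)\<^sup>2"
    by (simp_all add: power2_commute field_simps)
  ultimately have gap: "\<beta> / 2 * (\<alpha> * (1 - \<alpha>) * s\<^sup>2 + (c - \<alpha> * s)\<^sup>2) \<le> (f' s - f' c) * (c - \<alpha> * s)"
    using contact by linarith
  show ?thesis
  proof (cases "c = \<alpha> * s")
    case True
    with gap \<beta>_pos have "\<alpha> * (1 - \<alpha>) * s\<^sup>2 \<le> 0"
      by (simp add: mult_le_0_iff)
    with \<alpha> have "s = 0"
      by (simp add: mult_le_0_iff)
    with True show ?thesis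
      by simp
  next
    case False
    have "0 \<le> \<beta> / 2 * (\<alpha> * (1 - \<alpha>) * s\<^sup>2 + (c - \<alpha> * s)\<^sup>2)"
      using \<beta>_pos \<alpha> by simp
    with gap have "0 \<le> (f' s - f' c) * (c - \<alpha> * s)"
      by linarith
    moreover have "0 < c - \<alpha> * s"
      using False right by simp
    ultimately show ?thesis
      by (simp add: zero_le_mult_iff)
  qed
qed

lemma contact_gap_bound:
  assumes \<alpha>: "0 < \<alpha>" "\<alpha> < 1" and u: "0 \<le> um" "um < up" "up \<le> f' 0"
    and order: "rho_hat f R \<alpha> up \<le> rho_check f R \<alpha> um"
  shows "\<beta> / 2 * (rho_hat f R \<alpha> um - rho_check f R \<alpha> um) \<le> up - um"
proof -
  have "0 \<le> up" "um \<le> f' 0"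
    using u by linarith+
  obtain sm where sm: "sm \<in> {0..R}" "f' sm = um"
    by (rule deriv_attains[OF u(1) \<open>um \<le> f' 0\<close>])
  obtain sp where sp: "sp \<in> {0..R}" "f' sp = up"
    by (rule deriv_attains[OF \<open>0 \<le> up\<close> u(3)])
  define a b c where "a = rho_check f R \<alpha> um" and "b = rho_hat f R \<alpha> um"
    and "c = rho_hat f R \<alpha> up"
  have a: "a \<in> I_u f R \<alpha> um" and b: "b \<in> I_u f R \<alpha> um"
    using contact_points[OF \<alpha> sm(1)] sm(2) u(1) by (simp_all add: a_def b_def)
  have c: "c \<in> I_u f R \<alpha> up" and c_right: "\<alpha> * sp \<le> c"
    using contact_points[OF \<alpha> sp(1)] sp(2) \<open>0 \<le> up\<close> by (simp_all add: c_def)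
  have I_um: "I_u f R \<alpha> um = {\<rho> \<in> {0..R}. f \<rho> = \<alpha> * f sm + um * (\<rho> - \<alpha> * sm)}"
    using I_u_eq[OF \<alpha>(1) sm(1)] sm(2) by simp
  have a_mem: "a \<in> {0..R}" and b_mem: "b \<in> {0..R}"
    and fa: "f a = \<alpha> * f sm + um * (a - \<alpha> * sm)" and fb: "f b = \<alpha> * f sm + um * (b - \<alpha> * sm)"
    using a b unfolding I_um by simp_all
  have chord: "f b - f a = um * (b - a)"
    using fa fb by (simp add: right_diff_distrib)
  have "f' a \<le> f' c"
  proof -
    have "c \<in> {0..R}"
      using c unfolding I_u_def by simp
    moreover have "c \<le> a"
      using order by (simp add: a_def c_def)
    ultimately have "0 \<le> c" "c \<le> a" by simp_all
    moreover have "\<beta> * c \<le> \<beta> * a"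
      using \<open>c \<le> a\<close> \<beta>_pos by simp
    ultimately show ?thesis
      using strongly_antitone[of c a] a_mem by simp
  qed
  also have "f' c \<le> up"
    using deriv_at_contact_le[OF \<alpha> sp(1)] c c_right sp(2) by simp
  finally have slope: "f' a \<le> up" .
  show ?thesis
  proof (cases "a < b")
    case True
    have "\<beta> / 2 * (b - a)\<^sup>2 \<le> (f' a - um) * (b - a)"
      using tangent_bound[OF a_mem b_mem] chord by (simp add: algebra_simps)
    also have "\<dots> \<le> (up - um) * (b - a)"
      using slope True by (intro mult_right_mono) auto
    finally have "\<beta> / 2 * (b - a) * (b - a) \<le> (up - um) * (b - a)"
      by (simp add: power2_eq_square mult.assoc)
    with True show ?thesis
      by (simp add: a_def b_def mult_le_cancel_right_pos)
  next
    case False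
    with \<beta>_pos have "\<beta> / 2 * (b - a) \<le> 0"
      by (simp add: mult_nonneg_nonpos)
    with u have "\<beta> / 2 * (b - a) \<le> up - um"
      by linarith
    then show ?thesis
      by (simp add: a_def b_def)
  qed
qed

end

theorem mainTheorem3:
  fixes f f' f'' v v' v'' :: "real \<Rightarrow> real" and R B \<beta> \<alpha> um up :: real
  assumes R: "R > 0"
    and f_d1: "\<And>x. x \<in> {0..R} \<Longrightarrow> (f has_real_derivative f' x) (at x within {0..R})"
    and f_d2: "\<And>x. x \<in> {0..R} \<Longrightarrow> (f' has_real_derivative f'' x) (at x within {0..R})"
    and f_c2: "continuous_on {0..R} f''"
    and f_nonneg: "\<And>x. x \<in> {0..R} \<Longrightarrow> f x \<ge> 0"
    and v_d1: "\<And>x. x \<in> {0..R} \<Longrightarrow> (v has_real_derivative v' x) (at x within {0..R})"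
    and v_d2: "\<And>x. x \<in> {0..R} \<Longrightarrow> (v' has_real_derivative v'' x) (at x within {0..R})"
    and v_c2: "continuous_on {0..R} v''"
    and v_nonneg: "\<And>x. x \<in> {0..R} \<Longrightarrow> v x \<ge> 0"
    and fv: "\<And>\<rho>. \<rho> \<in> {0..R} \<Longrightarrow> f \<rho> = \<rho> * v \<rho>"
    and f0: "f 0 = 0" and fR: "f R = 0"
    and \<beta>: "\<beta> > 0" and B: "B \<ge> \<beta>"
    and f''_bounds: "\<And>x. x \<in> {0..R} \<Longrightarrow> - B \<le> f'' x \<and> f'' x \<le> - \<beta>"
    and v'_neg: "\<And>\<rho>. 0 < \<rho> \<Longrightarrow> \<rho> < R \<Longrightarrow> v' \<rho> < 0"
    and \<alpha>: "0 < \<alpha>" "\<alpha> < 1"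
    and u: "0 \<le> um" "um < up" "up \<le> Sup (v ` {0..R})"
    and order: "rho_hat f R \<alpha> up \<le> rho_check f R \<alpha> um"
  shows "up - um \<ge> \<beta> / 2 * (rho_hat f R \<alpha> um - rho_check f R \<alpha> um)"
proof -
  interpret strongly_concave_flux f f' R \<beta>
  proof
    show "continuous_on {0..R} f'"
      by (rule DERIV_continuous_on[OF f_d2])
    show "f' y + \<beta> * y \<le> f' x + \<beta> * x" if "0 \<le> x" "x \<le> y" "y \<le> R" for x y
      using deriv_plus_linear_antitone[OF f_d2 _ that] f''_bounds by blast
  qed (simp_all add: R \<beta> f0 fR f_d1 f_nonneg)
  have "(v has_real_derivative v' 0) (at 0 within {0..R})"
    using R by (intro v_d1) simp
  then have "up \<le> f' 0"
    using u(3) Sup_velocity_le_deriv_0[OF fv] by (meson order.trans)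
  with \<alpha> u order show ?thesis
    using contact_gap_bound by simp
qed

end
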